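(* Let $m \ge 2$ be a natural number and let $\tilde{\boldsymbol{\theta}}^m$ be a finite nonempty dataset of angles that has period $2\pi/m$. Then for every natural number $p$: $$\nu_p(\tilde{\boldsymbol{\theta}}^m) = 1 \quad \text{if } p \le m-1, \qquad 0 \le \nu_p(\tilde{\boldsymbol{\theta}}^m) \le 1 \quad \text{if } p = m.$$
   Context: A dataset of angles is a finite nonempty multiset $\boldsymbol{\theta} = \{\theta_j \mid j = 1, \dots, N\}$ of real numbers (angles in radians). For $p \in \mathbb{N} = \{1,2,\dots\}$, the $p$th angular variance is $\nu_p(\boldsymbol{\theta}) = 1 - \bar{R}_p$, where $\bar{R}_p = \sqrt{\bar{C}_p^2 + \bar{S}_p^2}$, $\bar{C}_p = \frac{1}{N}\sum_{j=1}^N \cos(p\theta_j)$, $\bar{S}_p = \frac{1}{N}\sum_{j=1}^N \sin(p\theta_j)$. A dataset has period $2\pi/m$ if, as a multiset of angles modulo $2\pi$, it is invariant under the rotation $\theta \mapsto \theta + 2\pi/m$. *)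

theory Defs
  imports Complex_Main "HOL-Library.Multiset"
begin

definition meanC :: "nat \<Rightarrow> real multiset \<Rightarrow> real" where
  "meanC p D = (\<Sum>\<^sub># (image_mset (\<lambda>\<theta>. cos (real p * \<theta>)) D)) / real (size D)"

definition meanS :: "nat \<Rightarrow> real multiset \<Rightarrow> real" where
  "meanS p D = (\<Sum>\<^sub># (image_mset (\<lambda>\<theta>. sin (real p * \<theta>)) D)) / real (size D)"

definition meanR :: "nat \<Rightarrow> real multiset \<Rightarrow> real" where
  "meanR p D = sqrt ((meanC p D)\<^sup>2 + (meanS p D)\<^sup>2)"

definition ang_var :: "nat \<Rightarrow> real multiset \<Rightarrow> real" where
  "ang_var p D = 1 - meanR p D"

definition mod2pi :: "real \<Rightarrow> real" where
  "mod2pi x = x - 2 * pi * of_int \<lfloor>x / (2 * pi)\<rfloor>"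

definition has_period :: "nat \<Rightarrow> real multiset \<Rightarrow> bool" where
  "has_period m D \<longleftrightarrow>
     image_mset (\<lambda>\<theta>. mod2pi (\<theta> + 2 * pi / real m)) D = image_mset mod2pi D"

end

theory Submission
  imports Defs
begin

text \<open>Up to the factor 1/N, the mean resultant length is the modulus of the resultant
  sum_j cis (p theta_j). Rotating a dataset of period 2 pi/m by 2 pi/m multiplies its p-th
  resultant by cis (2 pi p/m) and leaves it unchanged, so the resultant vanishes unless m
  divides p, and then the angular variance is 1. The bounds 0 <= nu_p <= 1 hold for every
  dataset by the triangle inequality.\<close>

definition resultant :: "nat \<Rightarrow> real multiset \<Rightarrow> complex" where
  "resultant p D = \<Sum>\<^sub># (image_mset (\<lambda>\<theta>. cis (real p * \<theta>)) D)"

lemma Re_resultant: "Re (resultant p D) = \<Sum>\<^sub># (image_mset (\<lambda>\<theta>. cos (real p * \<theta>)) D)"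
  unfolding resultant_def by (induction D) auto

lemma Im_resultant: "Im (resultant p D) = \<Sum>\<^sub># (image_mset (\<lambda>\<theta>. sin (real p * \<theta>)) D)"
  unfolding resultant_def by (induction D) auto

lemma norm_resultant_le_size: "cmod (resultant p D) \<le> real (size D)"
  unfolding resultant_def
proof (induction D)
  case (add \<theta> D)
  then show ?case
    using norm_triangle_ineq[of "cis (real p * \<theta>)"] by (simp add: norm_cis)
       (meson add_left_mono order_trans)
qed simp

lemma meanR_eq_norm_resultant: "meanR p D = cmod (resultant p D) / real (size D)"
proof -
  have "meanR p D = sqrt ((Re (resultant p D) / real (size D))\<^sup>2
                        + (Im (resultant p D) / real (size D))\<^sup>2)"
    unfolding meanR_def meanC_def meanS_def Re_resultant Im_resultant ..
  also have "\<dots> = sqrt (((Re (resultant p D))\<^sup>2 + (Im (resultant p D))\<^sup>2) / (real (size D))\<^sup>2)"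
    by (simp add: power_divide add_divide_distrib)
  also have "\<dots> = cmod (resultant p D) / real (size D)"
    by (simp add: real_sqrt_divide cmod_def)
  finally show ?thesis .
qed

text \<open>For the empty dataset \<open>meanR p {#} = 0\<close> because of division by zero, so no
  nonemptiness hypothesis is needed.\<close>

lemma meanR_nonneg: "0 \<le> meanR p D"
  unfolding meanR_def by simp

lemma meanR_le_1: "meanR p D \<le> 1"
  unfolding meanR_eq_norm_resultant
  using norm_resultant_le_size[of p D] by (cases "size D = 0") (auto simp: divide_le_eq_1 nonempty_has_size)

lemma ang_var_nonneg: "0 \<le> ang_var p D"
  unfolding ang_var_def using meanR_le_1 by simp

lemma ang_var_le_1: "ang_var p D \<le> 1"
  unfolding ang_var_def using meanR_nonneg by simp

lemma cis_of_nat_mult_mod2pi: "cis (real p * mod2pi x) = cis (real p * x)"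
proof -
  define k where "k = \<lfloor>x / (2 * pi)\<rfloor>"
  have "real p * mod2pi x = real p * x + 2 * pi * of_int (- (int p * k))"
    unfolding mod2pi_def k_def by (simp add: algebra_simps)
  then have "cis (real p * mod2pi x) = cis (real p * x) * cis (2 * pi * of_int (- (int p * k)))"
    by (simp only: cis_mult)
  then show ?thesis
    by (simp only: cis_multiple_2pi Ints_of_int mult_1_right)
qed

lemma resultant_rotate:
  "resultant p (image_mset (\<lambda>\<theta>. \<theta> + \<alpha>) D) = cis (real p * \<alpha>) * resultant p D"
  unfolding resultant_def
  by (simp add: image_mset.compositionality o_def sum_mset_distrib_left
                distrib_left cis_mult mult.commute)

lemma resultant_mod2pi: "resultant p (image_mset mod2pi D) = resultant p D"
  unfolding resultant_def
  by (simp add: image_mset.compositionality o_def cis_of_nat_mult_mod2pi)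

lemma has_period_resultant_invariant:
  assumes "has_period m D"
  shows "cis (real p * (2 * pi / real m)) * resultant p D = resultant p D"
proof -
  have "resultant p (image_mset mod2pi (image_mset (\<lambda>\<theta>. \<theta> + 2 * pi / real m) D))
      = resultant p (image_mset mod2pi D)"
    using assms unfolding has_period_def by (simp add: image_mset.compositionality o_def)
  then show ?thesis
    by (simp only: resultant_mod2pi resultant_rotate)
qed

lemma cis_2pi_fraction_eq_1_imp_dvd:
  assumes "m > 0" and "cis (real p * (2 * pi / real m)) = 1"
  shows "m dvd p"
proof -
  have "cos (real p * (2 * pi / real m)) = 1"
    using arg_cong[OF assms(2), of Re] by simp
  then obtain n :: int where "real p * (2 * pi / real m) = real_of_int n * 2 * pi"
    by (auto simp: cos_one_2pi_int)
  then have "real_of_int (int p) = real_of_int (n * int m)"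
    using assms(1) by (simp add: field_simps)
  then have "int m dvd int p"
    by (simp only: of_int_eq_iff) simp
  then show ?thesis by simp
qed

lemma has_period_resultant_eq_0:
  assumes "has_period m D" and "m > 0" and "\<not> m dvd p"
  shows "resultant p D = 0"
proof -
  have "(cis (real p * (2 * pi / real m)) - 1) * resultant p D = 0"
    using has_period_resultant_invariant[OF assms(1), of p] by (simp add: algebra_simps)
  moreover have "cis (real p * (2 * pi / real m)) \<noteq> 1"
    using cis_2pi_fraction_eq_1_imp_dvd assms(2,3) by blast
  ultimately show ?thesis by simp
qed

lemma has_period_ang_var_eq_1:
  assumes "has_period m D" and "m > 0" and "\<not> m dvd p"
  shows "ang_var p D = 1"
  unfolding ang_var_def meanR_eq_norm_resultant has_period_resultant_eq_0[OF assms] by simp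

theorem theorem1:
  fixes m p :: nat and D :: "real multiset"
  assumes "m \<ge> 2" and "D \<noteq> {#}" and "has_period m D" and "p \<ge> 1"
  shows "(p \<le> m - 1 \<longrightarrow> ang_var p D = 1) \<and>
         (p = m \<longrightarrow> 0 \<le> ang_var p D \<and> ang_var p D \<le> 1)"
proof (intro conjI impI)
  assume "p \<le> m - 1"
  with assms(1,4) have "\<not> m dvd p"
    by (auto dest: dvd_imp_le)
  with assms(1,3) show "ang_var p D = 1"
    by (intro has_period_ang_var_eq_1) auto
qed (simp_all add: ang_var_nonneg ang_var_le_1)

end
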